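(* Let $a>0$ and let $\theta_0,\theta_1,\theta_2\in\mathbb{R}$ be distinct. In the $(t,x)$-plane consider the points $P_i=\left(\theta_i,\tfrac12 a\theta_i^2\right)$, $i=0,1,2$, on the parabola $x=\tfrac12 at^2$. For $c>0$ equip the plane with the Euclidean inner product $u\cdot v=c^2u_tv_t+u_xv_x$ associated to the metric $ds^2=dx^2+c^2dt^2$, and let $\theta(c)\in[0,\pi/2]$ be the (acute) angle between the chords $P_0P_1$ and $P_0P_2$, defined by $\cos^2(\theta(c))=\frac{(u\cdot v)^2}{(u\cdot u)(v\cdot v)}$ with $u=P_1-P_0$, $v=P_2-P_0$. Then $$\theta(c)^2\sim\frac{a^2}{4c^2}(\theta_1-\theta_2)^2\quad\text{as } c\to\infty,$$ an asymptotic which does not depend on $\theta_0$.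
   Context: The parabola $x=\tfrac12at^2$ is the $c\to\infty$ limit of the ellipses $\left(x-\frac{c^2}{a}\right)^2+c^2t^2=\frac{c^4}{a^2}$, parametrised as $x=\frac{c^2}{a}(1-\cos(a\theta/c))$, $t=\frac{c}{a}\sin(a\theta/c)$; each such ellipse is a metric circle for $ds^2=dx^2+c^2dt^2$. *)

theory Defs
  imports "HOL-Analysis.Analysis" "HOL-Library.Landau_Symbols"
begin

definition cinner :: "real \<Rightarrow> real \<times> real \<Rightarrow> real \<times> real \<Rightarrow> real" where
  "cinner c u v = c^2 * fst u * fst v + snd u * snd v"

definition parab_pt :: "real \<Rightarrow> real \<Rightarrow> real \<times> real" where
  "parab_pt a s = (s, a * s^2 / 2)"

definition chord_angle :: "real \<Rightarrow> real \<Rightarrow> real \<Rightarrow> real \<Rightarrow> real \<Rightarrow> real" where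
  "chord_angle a t0 t1 t2 c =
     (let u = parab_pt a t1 - parab_pt a t0; v = parab_pt a t2 - parab_pt a t0
      in arccos (sqrt ((cinner c u v)^2 / (cinner c u u * cinner c v v))))"

end

theory Submission
  imports Defs "HOL-Real_Asymp.Real_Asymp"
begin

text \<open>The chord from \<open>P\<^sub>0\<close> to \<open>P\<^sub>i\<close> has slope \<open>p\<^sub>i = a (\<theta>\<^sub>i + \<theta>\<^sub>0) / 2\<close>. For
  directions \<open>(1, p)\<close> and \<open>(1, q)\<close> Lagrange's identity
  \<open>(c\<^sup>2 + p\<^sup>2)(c\<^sup>2 + q\<^sup>2) = (c\<^sup>2 + p q)\<^sup>2 + c\<^sup>2 (p - q)\<^sup>2\<close> gives
  \<open>cos\<^sup>2 \<theta> = 1 / (1 + tan\<^sup>2 \<theta>)\<close> with \<open>tan \<theta> = c \<bar>p - q\<bar> / \<bar>c\<^sup>2 + p q\<bar>\<close>.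
  Since \<open>p - q = a (\<theta>\<^sub>1 - \<theta>\<^sub>2) / 2\<close>, this is asymptotic to \<open>a \<bar>\<theta>\<^sub>1 - \<theta>\<^sub>2\<bar> / (2 c)\<close>,
  and the slope of the base point \<open>\<theta>\<^sub>0\<close> only enters through the lower order term \<open>p q\<close>.\<close>

lemma parab_pt_diff:
  "parab_pt a s - parab_pt a r = (s - r, (s - r) * (a * (s + r) / 2))"
  by (simp add: parab_pt_def power2_eq_square algebra_simps)

lemma cinner_cos_sq_slopes:
  fixes c d1 d2 p q :: real
  assumes "d1 \<noteq> 0" "d2 \<noteq> 0" "c \<noteq> 0" "c\<^sup>2 + p * q \<noteq> 0"
  shows "(cinner c (d1, d1 * p) (d2, d2 * q))\<^sup>2
           / (cinner c (d1, d1 * p) (d1, d1 * p) * cinner c (d2, d2 * q) (d2, d2 * q))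
         = 1 / (1 + (c * (p - q) / (c\<^sup>2 + p * q))\<^sup>2)"
proof -
  have lagrange: "(c\<^sup>2 + p\<^sup>2) * (c\<^sup>2 + q\<^sup>2) = (c\<^sup>2 + p * q)\<^sup>2 + (c * (p - q))\<^sup>2"
    by (simp add: power2_eq_square algebra_simps)
  have num: "(cinner c (d1, d1 * p) (d2, d2 * q))\<^sup>2 = (d1 * d2)\<^sup>2 * (c\<^sup>2 + p * q)\<^sup>2"
    by (simp add: cinner_def power2_eq_square algebra_simps)
  have den: "cinner c (d1, d1 * p) (d1, d1 * p) * cinner c (d2, d2 * q) (d2, d2 * q)
               = (d1 * d2)\<^sup>2 * ((c\<^sup>2 + p * q)\<^sup>2 + (c * (p - q))\<^sup>2)"
    unfolding lagrange [symmetric] by (simp add: cinner_def power2_eq_square algebra_simps)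
  have "1 / (1 + (c * (p - q) / (c\<^sup>2 + p * q))\<^sup>2)
          = (c\<^sup>2 + p * q)\<^sup>2 / ((c\<^sup>2 + p * q)\<^sup>2 + (c * (p - q))\<^sup>2)"
    using assms(4) by (simp add: power_divide field_simps)
  with assms(1,2) show ?thesis
    unfolding num den by simp
qed

lemma arccos_sqrt_inverse_one_plus_square:
  fixes y :: real
  shows "arccos (sqrt (1 / (1 + y\<^sup>2))) = arctan \<bar>y\<bar>"
proof -
  have "sqrt (1 / (1 + y\<^sup>2)) = cos (arctan \<bar>y\<bar>)"
    by (simp add: cos_arctan real_sqrt_divide)
  moreover have "0 \<le> arctan \<bar>y\<bar>"
    by simp
  moreover have "arctan \<bar>y\<bar> \<le> pi"
    using arctan_ubound [of "\<bar>y\<bar>"] pi_gt_zero by linarith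
  ultimately show ?thesis
    by (simp add: arccos_cos)
qed

lemma chord_angle_eq_arctan:
  assumes "t1 \<noteq> t0" "t2 \<noteq> t0" "c \<noteq> 0"
    and "c\<^sup>2 + (a * (t1 + t0) / 2) * (a * (t2 + t0) / 2) \<noteq> 0"
  shows "chord_angle a t0 t1 t2 c
           = arctan \<bar>c * (a * (t1 - t2) / 2) / (c\<^sup>2 + (a * (t1 + t0) / 2) * (a * (t2 + t0) / 2))\<bar>"
proof -
  define p where "p = a * (t1 + t0) / 2"
  define q where "q = a * (t2 + t0) / 2"
  have "p - q = a * (t1 - t2) / 2"
    by (simp add: p_def q_def field_simps)
  moreover have "chord_angle a t0 t1 t2 c = arccos (sqrt (1 / (1 + (c * (p - q) / (c\<^sup>2 + p * q))\<^sup>2)))"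
    unfolding chord_angle_def Let_def parab_pt_diff p_def [symmetric] q_def [symmetric]
    using assms by (subst cinner_cos_sq_slopes) (auto simp: p_def q_def)
  ultimately show ?thesis
    by (simp only: arccos_sqrt_inverse_one_plus_square p_def q_def)
qed

theorem mainTheorem5:
  fixes a t0 t1 t2 :: real
  assumes "a > 0" and "t0 \<noteq> t1" and "t0 \<noteq> t2" and "t1 \<noteq> t2"
  shows "(\<lambda>c. (chord_angle a t0 t1 t2 c)^2)
           \<sim>[at_top] (\<lambda>c. a^2 / (4 * c^2) * (t1 - t2)^2)"
proof -
  define k where "k = a * \<bar>t1 - t2\<bar> / 2"
  define m where "m = (a * (t1 + t0) / 2) * (a * (t2 + t0) / 2)"
  have "k > 0"
    using assms by (simp add: k_def)
  then have "(\<lambda>c. (arctan (k * c / (c\<^sup>2 + m)))\<^sup>2) \<sim>[at_top] (\<lambda>c. k\<^sup>2 / c\<^sup>2)"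
    by real_asymp
  moreover have "eventually (\<lambda>c. (arctan (k * c / (c\<^sup>2 + m)))\<^sup>2
                                   = (chord_angle a t0 t1 t2 c)\<^sup>2) at_top"
    using eventually_gt_at_top [of "1 + \<bar>m\<bar>"]
  proof eventually_elim
    case (elim c)
    then have "1 \<le> c"
      by simp
    then have "c \<le> c\<^sup>2"
      using mult_left_mono [of 1 c c] by (simp add: power2_eq_square)
    with elim have "c > 0" "c\<^sup>2 + m > 0"
      by auto
    then have "k * c / (c\<^sup>2 + m) = \<bar>c * (a * (t1 - t2) / 2) / (c\<^sup>2 + m)\<bar>"
      using assms(1) by (simp add: k_def abs_mult)
    with \<open>c > 0\<close> \<open>c\<^sup>2 + m > 0\<close> show ?case
      using assms by (simp add: chord_angle_eq_arctan m_def)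
  qed
  moreover have "k\<^sup>2 / c\<^sup>2 = a^2 / (4 * c^2) * (t1 - t2)^2" for c
    by (simp add: k_def power_divide power_mult_distrib power2_abs)
  ultimately show ?thesis
    by (auto intro: asymp_equiv_transfer)
qed

end
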